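(* In the setting described in the context, the optimal value of \[ O(\mathbf y)=\min_{\tilde{\mathbf y}\in\{-1,1\}^n}\ \frac12\sum_{i=1}^n(1-y_i\tilde y_i)\quad\text{s.t.}\quad \operatorname{sign}(\hat p_t)\sum_{i=1}^n\tilde y_iQ_t^i<0 \] equals $k'=\min\{k\in\{1,\dots,n\}: P_k>S/2\}$, and this set is nonempty. Moreover, flipping exactly the labels of the training points indexed by $a_{(1)},\dots,a_{(k')}$ is an optimal solution.
   Context: Let $n\ge1$, let $Q_t^1,\dots,Q_t^n\in\mathbb R$, and let $\mathbf y\in\{-1,1\}^n$. Put $\hat p_t=\sum_{i=1}^n y_iQ_t^i$ and assume $\hat p_t\ne0$. Define $a_i=\operatorname{sign}(\hat p_t)\,y_iQ_t^i$ for $i\in[n]$ and $S=\sum_{i=1}^n a_i$, so that $S=|\hat p_t|>0$. Let $a_{(1)}\ge a_{(2)}\ge\dots\ge a_{(n)}$ be the $a_i$ sorted in nonincreasing order, and let $P_k=\sum_{j=1}^k a_{(j)}$. The quantity $\frac12\sum_i(1-y_i\tilde y_i)$ is the number of indices $i$ with $\tilde y_i\neq y_i$. *)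

theory Defs
  imports Complex_Main "HOL-Library.FuncSet"
begin

text \<open>Training points are indexed by {1..n}; labels and queries are functions on nat.\<close>

definition phat :: "nat \<Rightarrow> (nat \<Rightarrow> real) \<Rightarrow> (nat \<Rightarrow> real) \<Rightarrow> real" where
  "phat n Q y = (\<Sum>i=1..n. y i * Q i)"

definition acoef :: "nat \<Rightarrow> (nat \<Rightarrow> real) \<Rightarrow> (nat \<Rightarrow> real) \<Rightarrow> nat \<Rightarrow> real" where
  "acoef n Q y i = sgn (phat n Q y) * y i * Q i"

definition flipcost :: "nat \<Rightarrow> (nat \<Rightarrow> real) \<Rightarrow> (nat \<Rightarrow> real) \<Rightarrow> real" where
  "flipcost n y yt = (1/2) * (\<Sum>i=1..n. (1 - y i * yt i))"

definition feasible :: "nat \<Rightarrow> (nat \<Rightarrow> real) \<Rightarrow> (nat \<Rightarrow> real) \<Rightarrow> (nat \<Rightarrow> real) set" where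
  "feasible n Q y = {yt \<in> {1..n} \<rightarrow>\<^sub>E {-1, 1}.
      sgn (phat n Q y) * (\<Sum>i=1..n. yt i * Q i) < 0}"

definition Opt :: "nat \<Rightarrow> (nat \<Rightarrow> real) \<Rightarrow> (nat \<Rightarrow> real) \<Rightarrow> real" where
  "Opt n Q y = Min (flipcost n y ` feasible n Q y)"

text \<open>Partial sums P_k of the sorted a-values, sorting given by the permutation sigma:
  a_(j) = a (sigma j).\<close>
definition Psum :: "nat \<Rightarrow> (nat \<Rightarrow> real) \<Rightarrow> (nat \<Rightarrow> real) \<Rightarrow> (nat \<Rightarrow> nat) \<Rightarrow> nat \<Rightarrow> real" where
  "Psum n Q y \<sigma> k = (\<Sum>j=1..k. acoef n Q y (\<sigma> j))"

end

theory Submission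
  imports Defs
begin

text \<open>Flipping the labels of an index set F \<subseteq> {1..n} costs card F and turns
  sgn(phat) * \<Sum> yt_i Q_i from S into S - 2 \<Sum>_{i\<in>F} a_i, so the flip is feasible iff
  \<Sum>_{i\<in>F} a_i > S/2. Among index sets of a given size the sum of the a_i is largest
  for the corresponding prefix of the sorted order; hence the cheapest feasible flip is
  the shortest sorted prefix whose sum exceeds S/2.\<close>

lemma inj_on_prefix:
  fixes \<sigma> :: "nat \<Rightarrow> 'a"
  assumes "bij_betw \<sigma> {1..n} A" and "k \<le> n"
  shows "inj_on \<sigma> {1..k}"
  using assms by (meson bij_betw_imp_inj_on inj_on_subset atLeastatMost_subset_iff order_refl)

lemma card_image_prefix:
  fixes \<sigma> :: "nat \<Rightarrow> 'a"
  assumes "bij_betw \<sigma> {1..n} A" and "k \<le> n"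
  shows "card (\<sigma> ` {1..k}) = k"
  using inj_on_prefix[OF assms] by (simp add: card_image)

lemma sum_image_prefix:
  fixes \<sigma> :: "nat \<Rightarrow> 'a"
  assumes "bij_betw \<sigma> {1..n} A" and "k \<le> n"
  shows "sum a (\<sigma> ` {1..k}) = (\<Sum>j=1..k. a (\<sigma> j))"
  using inj_on_prefix[OF assms] by (simp add: sum.reindex)

lemma sum_le_sum_sorted_prefix:
  fixes \<sigma> :: "nat \<Rightarrow> 'a" and a :: "'a \<Rightarrow> 'b::linordered_idom"
  assumes perm: "bij_betw \<sigma> {1..n} A"
    and sorted: "\<forall>j\<in>{1..n}. \<forall>l\<in>{1..n}. j \<le> l \<longrightarrow> a (\<sigma> l) \<le> a (\<sigma> j)"
    and F: "F \<subseteq> A"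
  shows "sum a F \<le> (\<Sum>j=1..card F. a (\<sigma> j))"
proof (cases "F = {}")
  case True
  then show ?thesis by simp
next
  case False
  define m where "m = card F"
  define G where "G = \<sigma> ` {1..m}"
  \<comment> \<open>Exchange argument: t separates F - G from G - F, and both have the same size.\<close>
  define t where "t = a (\<sigma> m)"
  have finA: "finite A" using perm bij_betw_finite by blast
  have finF: "finite F" using F finA finite_subset by blast
  have "card A = n" using bij_betw_same_card[OF perm] by simp
  then have m: "1 \<le> m" "m \<le> n"
    using False finF card_mono[OF finA F] unfolding m_def by (auto simp: Suc_le_eq)
  have cG: "card G = m" unfolding G_def using card_image_prefix[OF perm m(2)] .
  have finG: "finite G" unfolding G_def by simp
  have "t \<le> a x" if "x \<in> G" for x
    using that sorted m unfolding G_def t_def by auto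
  then have G_F: "of_nat (card (G - F)) * t \<le> sum a (G - F)"
    using sum_bounded_below[of "G - F" t a] by auto
  have "a x \<le> t" if x: "x \<in> F - G" for x
  proof -
    obtain l where l: "l \<in> {1..n}" "x = \<sigma> l"
      using x F perm by (metis DiffD1 bij_betw_imp_surj_on imageE subsetD)
    then have "m \<le> l" using x unfolding G_def by auto
    then show ?thesis unfolding t_def using sorted l m by auto
  qed
  then have F_G: "sum a (F - G) \<le> of_nat (card (F - G)) * t"
    using sum_bounded_above[of "F - G" a t] by auto
  have "card (F - G) = card (G - F)"
    using finF finG cG by (simp add: card_Diff_subset_Int Int_commute m_def)
  then have "sum a (F - G) \<le> sum a (G - F)"
    using F_G G_F by simp
  then have "sum a F \<le> sum a G"
    using sum.Int_Diff[OF finF, of a G] sum.Int_Diff[OF finG, of a F] by (simp add: Int_commute)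
  also have "sum a G = (\<Sum>j=1..m. a (\<sigma> j))"
    unfolding G_def using sum_image_prefix[OF perm m(2)] .
  finally show ?thesis unfolding m_def .
qed

definition flip_labels :: "nat \<Rightarrow> (nat \<Rightarrow> real) \<Rightarrow> nat set \<Rightarrow> nat \<Rightarrow> real" where
  "flip_labels n y F = restrict (\<lambda>i. if i \<in> F then - y i else y i) {1..n}"

lemma sum_acoef_eq_abs_phat: "(\<Sum>i=1..n. acoef n Q y i) = \<bar>phat n Q y\<bar>"
proof -
  have "(\<Sum>i=1..n. acoef n Q y i) = sgn (phat n Q y) * phat n Q y"
    unfolding acoef_def phat_def by (simp add: sum_distrib_left mult.assoc)
  then show ?thesis by (simp add: sgn_if)
qed

lemma sgn_phat_mult_sum_flip_labels:
  assumes "F \<subseteq> {1..n}"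
  shows "sgn (phat n Q y) * (\<Sum>i=1..n. flip_labels n y F i * Q i)
    = (\<Sum>i=1..n. acoef n Q y i) - 2 * sum (acoef n Q y) F"
proof -
  have "sgn (phat n Q y) * (\<Sum>i=1..n. flip_labels n y F i * Q i)
      = (\<Sum>i=1..n. acoef n Q y i - 2 * (if i \<in> F then acoef n Q y i else 0))"
    unfolding sum_distrib_left
    by (rule sum.cong) (auto simp: flip_labels_def acoef_def algebra_simps)
  also have "\<dots> = (\<Sum>i=1..n. acoef n Q y i) - 2 * (\<Sum>i=1..n. if i \<in> F then acoef n Q y i else 0)"
    by (simp add: sum_subtractf sum_distrib_left)
  also have "(\<Sum>i=1..n. if i \<in> F then acoef n Q y i else 0) = sum (acoef n Q y) F"
    using assms by (simp add: sum.inter_restrict[symmetric] Int_absorb1)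
  finally show ?thesis .
qed

lemma flip_labels_in_feasible_iff:
  assumes y: "\<forall>i\<in>{1..n}. y i \<in> {-1, 1}" and F: "F \<subseteq> {1..n}"
  shows "flip_labels n y F \<in> feasible n Q y
    \<longleftrightarrow> sum (acoef n Q y) F > (\<Sum>i=1..n. acoef n Q y i) / 2"
proof -
  have "flip_labels n y F \<in> {1..n} \<rightarrow>\<^sub>E {-1, 1}"
    using y unfolding flip_labels_def by fastforce
  then show ?thesis
    unfolding feasible_def using sgn_phat_mult_sum_flip_labels[OF F] by auto
qed

lemma flipcost_flip_labels:
  assumes y: "\<forall>i\<in>{1..n}. y i \<in> {-1, 1}" and F: "F \<subseteq> {1..n}"
  shows "flipcost n y (flip_labels n y F) = real (card F)"
proof -
  have "(\<Sum>i=1..n. 1 - y i * flip_labels n y F i) = (\<Sum>i=1..n. if i \<in> F then 2 else 0)"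
  proof (rule sum.cong)
    fix i assume i: "i \<in> {1..n}"
    then have "y i = -1 \<or> y i = 1" using y by auto
    then show "1 - y i * flip_labels n y F i = (if i \<in> F then 2 else 0)"
      using i unfolding flip_labels_def by auto
  qed simp
  also have "\<dots> = 2 * real (card F)"
    using F by (simp add: sum.If_cases Int_absorb1)
  finally show ?thesis unfolding flipcost_def by simp
qed

lemma feasible_eq_flip_labels:
  assumes y: "\<forall>i\<in>{1..n}. y i \<in> {-1, 1}" and yt: "yt \<in> feasible n Q y"
  shows "yt = flip_labels n y {i \<in> {1..n}. yt i \<noteq> y i}"
proof
  fix i
  have yt_PiE: "yt \<in> {1..n} \<rightarrow>\<^sub>E {-1, 1}" using yt unfolding feasible_def by auto
  show "yt i = flip_labels n y {i \<in> {1..n}. yt i \<noteq> y i} i"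
  proof (cases "i \<in> {1..n}")
    case True
    then have "yt i = -1 \<or> yt i = 1" "y i = -1 \<or> y i = 1" using yt_PiE y by auto
    then show ?thesis using True unfolding flip_labels_def by auto
  next
    case False
    then show ?thesis using yt_PiE unfolding flip_labels_def by auto
  qed
qed

lemma finite_feasible: "finite (feasible n Q y)"
proof (rule finite_subset)
  show "feasible n Q y \<subseteq> {1..n} \<rightarrow>\<^sub>E {-1, 1::real}" unfolding feasible_def by auto
  show "finite ({1..n} \<rightarrow>\<^sub>E {-1, 1::real})" by (rule finite_PiE) auto
qed

lemma Psum_eq_sum_image:
  assumes "bij_betw \<sigma> {1..n} {1..n}" and "k \<le> n"
  shows "Psum n Q y \<sigma> k = sum (acoef n Q y) (\<sigma> ` {1..k})"
  unfolding Psum_def by (rule sum_image_prefix[OF assms, symmetric])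

lemma Psum_full:
  assumes "bij_betw \<sigma> {1..n} {1..n}"
  shows "Psum n Q y \<sigma> n = (\<Sum>i=1..n. acoef n Q y i)"
  using Psum_eq_sum_image[OF assms order_refl] assms by (simp add: bij_betw_def)

lemma prefix_flip_feasible:
  assumes y: "\<forall>i\<in>{1..n}. y i \<in> {-1, 1}" and perm: "bij_betw \<sigma> {1..n} {1..n}"
    and k: "k \<le> n" "Psum n Q y \<sigma> k > (\<Sum>i=1..n. acoef n Q y i) / 2"
  shows "flip_labels n y (\<sigma> ` {1..k}) \<in> feasible n Q y"
    and "flipcost n y (flip_labels n y (\<sigma> ` {1..k})) = real k"
proof -
  have G: "\<sigma> ` {1..k} \<subseteq> {1..n}" using perm k by (auto simp: bij_betw_def)
  show "flip_labels n y (\<sigma> ` {1..k}) \<in> feasible n Q y"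
    using flip_labels_in_feasible_iff[OF y G] Psum_eq_sum_image[OF perm k(1)] k(2) by simp
  show "flipcost n y (flip_labels n y (\<sigma> ` {1..k})) = real k"
    using flipcost_flip_labels[OF y G] card_image_prefix[OF perm k(1)] by simp
qed

lemma prefix_sum_exceeds_at_flipcost:
  assumes y: "\<forall>i\<in>{1..n}. y i \<in> {-1, 1}" and perm: "bij_betw \<sigma> {1..n} {1..n}"
    and sorted: "\<forall>j\<in>{1..n}. \<forall>l\<in>{1..n}. j \<le> l \<longrightarrow> acoef n Q y (\<sigma> l) \<le> acoef n Q y (\<sigma> j)"
    and yt: "yt \<in> feasible n Q y"
  obtains k where "k \<in> {1..n}" "Psum n Q y \<sigma> k > (\<Sum>i=1..n. acoef n Q y i) / 2"
    and "flipcost n y yt = real k"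
proof
  define F where "F = {i \<in> {1..n}. yt i \<noteq> y i}"
  have F: "F \<subseteq> {1..n}" unfolding F_def by auto
  have yt_F: "yt = flip_labels n y F"
    using feasible_eq_flip_labels[OF y yt] unfolding F_def .
  then have F_gt: "sum (acoef n Q y) F > (\<Sum>i=1..n. acoef n Q y i) / 2"
    using flip_labels_in_feasible_iff[OF y F] yt by simp
  have "F \<noteq> {}" "finite F"
    using F_gt sum_acoef_eq_abs_phat[of n Q y] finite_subset[OF F] by auto
  then show "card F \<in> {1..n}"
    using card_mono[OF _ F] by (auto simp: Suc_le_eq card_gt_0_iff)
  show "Psum n Q y \<sigma> (card F) > (\<Sum>i=1..n. acoef n Q y i) / 2"
    using F_gt sum_le_sum_sorted_prefix[OF perm sorted F] unfolding Psum_def by linarith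
  show "flipcost n y yt = real (card F)"
    using flipcost_flip_labels[OF y F] yt_F by simp
qed

lemma Opt_eqI:
  assumes "yt \<in> feasible n Q y" and "flipcost n y yt = c"
    and "\<And>yt'. yt' \<in> feasible n Q y \<Longrightarrow> c \<le> flipcost n y yt'"
  shows "Opt n Q y = c"
  unfolding Opt_def using assms finite_feasible
  by (intro antisym) (metis Min_le finite_imageI image_eqI, subst Min_ge_iff, auto)

theorem mainTheorem7:
  fixes n :: nat and Q y :: "nat \<Rightarrow> real" and \<sigma> :: "nat \<Rightarrow> nat"
  assumes hn: "n \<ge> 1"
    and hy: "\<forall>i\<in>{1..n}. y i \<in> {-1, 1}"
    and hp: "phat n Q y \<noteq> 0"
    and hperm: "bij_betw \<sigma> {1..n} {1..n}"
    and hsorted: "\<forall>j\<in>{1..n}. \<forall>l\<in>{1..n}. j \<le> l \<longrightarrow> acoef n Q y (\<sigma> l) \<le> acoef n Q y (\<sigma> j)"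
  shows "let S = (\<Sum>i=1..n. acoef n Q y i);
             K = {k \<in> {1..n}. Psum n Q y \<sigma> k > S / 2};
             k' = (LEAST k. k \<in> K);
             ystar = restrict (\<lambda>i. if i \<in> \<sigma> ` {1..k'} then - y i else y i) {1..n}
         in K \<noteq> {} \<and> Opt n Q y = real k' \<and>
            ystar \<in> feasible n Q y \<and> flipcost n y ystar = Opt n Q y"
proof -
  define S where "S = (\<Sum>i=1..n. acoef n Q y i)"
  define K where "K = {k \<in> {1..n}. Psum n Q y \<sigma> k > S / 2}"
  define k' where "k' = (LEAST k. k \<in> K)"
  have "S > 0" using hp sum_acoef_eq_abs_phat unfolding S_def by simp
  then have "n \<in> K" using hn Psum_full[OF hperm] unfolding K_def S_def by simp
  then have "k' \<in> K" unfolding k'_def by (rule LeastI)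
  then have opt: "flip_labels n y (\<sigma> ` {1..k'}) \<in> feasible n Q y"
      "flipcost n y (flip_labels n y (\<sigma> ` {1..k'})) = real k'"
    using prefix_flip_feasible[OF hy hperm] unfolding K_def S_def by auto
  have "real k' \<le> flipcost n y yt" if yt: "yt \<in> feasible n Q y" for yt
  proof -
    obtain k where "k \<in> K" "flipcost n y yt = real k"
      using prefix_sum_exceeds_at_flipcost[OF hy hperm hsorted yt] unfolding K_def S_def by auto
    then show ?thesis using Least_le[of "\<lambda>k. k \<in> K"] unfolding k'_def by auto
  qed
  then have "Opt n Q y = real k'" using Opt_eqI[OF opt] by blast
  then show ?thesis
    using \<open>n \<in> K\<close> opt
    unfolding Let_def S_def[symmetric] K_def[symmetric] k'_def[symmetric] flip_labels_def
    by auto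
qed

end
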